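(* Let $1\le k<i$ with $n-i\ge i-k$, and let $\lambda^{i,k}=[n-i,\,i-k,\,1^k]$. Let $\alpha=(1^{a_1},\dots,n^{a_n})$ and $\beta=(1^{b_1},\dots,n^{b_n})$ be conjugacy classes of $S_n$ with $a_j=b_j$ for all $j<i$. Then $\chi_{\lambda^{i,k}}(\alpha)-\chi_{\lambda^{i,k}}(\beta)=(-1)^k(a_i-b_i)$, $\;d_{\lambda^{i,k}}=\binom ni\binom{i-1}{k}\frac{n-2i+k+1}{n-i+k+1}$, and for a transposition $\tau$, $\frac{\chi_{\lambda^{i,k}}(\tau)}{d_{\lambda^{i,k}}}=1-\frac{i(n-i+k+1)}{\binom n2}$.
   Context: $[n-i,i-k,1^k]$ denotes the partition with parts $n-i$, $i-k$ and $k$ parts equal to $1$. $\chi_\lambda$ is the irreducible character of $S_n$ indexed by $\lambda$, $d_\lambda$ its dimension; $a_j$ is the number of $j$-cycles in class $\alpha$. *)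

theory Defs
  imports Complex_Main "HOL-Combinatorics.Permutations" "HOL-Library.FuncSet"
begin

text \<open>A conjugacy class of S_n is given by its cycle type a, where a j is the
number of j-cycles (j = 1..n); a is normalised to 0 outside 1..n.\<close>
definition cycle_type :: "nat \<Rightarrow> (nat \<Rightarrow> nat) \<Rightarrow> bool" where
  "cycle_type n a \<longleftrightarrow> (\<Sum>j=1..n. j * a j) = n \<and> (\<forall>j. (j = 0 \<or> n < j) \<longrightarrow> a j = 0)"

definition cycle_list :: "nat \<Rightarrow> (nat \<Rightarrow> nat) \<Rightarrow> nat list" where
  "cycle_list n a = concat (map (\<lambda>j. replicate (a j) j) [1..<Suc n])"

text \<open>Coefficient of x^m in the product of power sums p_rho in l variables
  x_0,...,x_(l-1): number of ways to assign each part of rho to a variable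
  so that the parts assigned to x_v sum to m v.\<close>
definition psum_coeff :: "nat list \<Rightarrow> nat \<Rightarrow> (nat \<Rightarrow> int) \<Rightarrow> nat" where
  "psum_coeff rho l m = card {f \<in> {..<length rho} \<rightarrow>\<^sub>E {..<l}.
      \<forall>v<l. int (\<Sum>t\<in>{t. t < length rho \<and> f t = v}. rho ! t) = m v}"

text \<open>Irreducible character chi_lambda of S_n evaluated at the class with cycle type a,
  via the Frobenius character formula: chi_lambda(rho) is the coefficient of
  x^(lambda+delta) in a_delta * p_rho, with l = length lambda variables,
  delta = (l-1, ..., 1, 0).\<close>
definition character :: "nat list \<Rightarrow> nat \<Rightarrow> (nat \<Rightarrow> nat) \<Rightarrow> int" where
  "character lam n a =
     (let l = length lam in
      \<Sum>\<sigma>\<in>{\<sigma>. \<sigma> permutes {..<l}}. sign \<sigma> *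
         int (psum_coeff (cycle_list n a) l
               (\<lambda>v. int (lam ! v) + int (l - 1 - v) - int (l - 1 - \<sigma> v))))"

definition id_class :: "nat \<Rightarrow> nat \<Rightarrow> nat" where
  "id_class n = (\<lambda>j. if j = 1 then n else 0)"

definition transp_class :: "nat \<Rightarrow> nat \<Rightarrow> nat" where
  "transp_class n = (\<lambda>j. if j = 1 then n - 2 else if j = 2 then 1 else 0)"

definition dimension :: "nat list \<Rightarrow> nat \<Rightarrow> int" where
  "dimension lam n = character lam n (id_class n)"

definition hook2 :: "nat \<Rightarrow> nat \<Rightarrow> nat \<Rightarrow> nat list" where
  "hook2 n i k = [n - i, i - k] @ replicate k 1"

end

(* Characters are computed from the Frobenius formula, extended to an arbitrary integer vector nu:
   chi^nu(rho) is the coefficient of x^(nu + delta) in a_delta p_rho.  Removing a part r of rho gives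
   chi^nu(rho) = sum_w chi^(nu - r e_w)(rho without r), and a vector that is not a partition either
   gives 0 (two entries of nu + delta coincide, or one is negative) or straightens to minus another one.

   For lambda = [n - i, i - k, 1^k] a part of length at least i can only be taken from the first row,
   or, if it equals i, from the second row, which leaves (-1)^k times a one-row character.  So the long
   cycles contribute (-1)^k a_i on top of a term that depends only on the cycles shorter than i.

   For the identity and a transposition, removing fixed points gives the branching rule among the
   diagrams [a, b, 1^j].  The hook length formula d and d * 2 (sum of contents) / (n (n - 1)) obey the
   same recursion and vanish on the same degenerate shapes, so they are the dimension and the value at
   a transposition. *)

theory Submission
  imports Defs
begin

section \<open>Products of power sums\<close>

lemma psum_coeff_Nil: "psum_coeff [] l m = (if \<forall>v<l. m v = 0 then 1 else 0)"
proof -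
  have "{..<0::nat} \<rightarrow>\<^sub>E {..<l} = {\<lambda>_. undefined}" by auto
  then show ?thesis unfolding psum_coeff_def by (auto simp del: lessThan_0)
qed

definition assignments :: "nat list \<Rightarrow> nat \<Rightarrow> (nat \<Rightarrow> int) \<Rightarrow> (nat \<Rightarrow> nat) set" where
  "assignments \<rho> l m = {f \<in> {..<length \<rho>} \<rightarrow>\<^sub>E {..<l}.
     \<forall>v<l. int (\<Sum>t | t < length \<rho> \<and> f t = v. \<rho> ! t) = m v}"

lemma psum_coeff_eq_card: "psum_coeff \<rho> l m = card (assignments \<rho> l m)"
  unfolding psum_coeff_def assignments_def ..

lemma finite_assignments: "finite (assignments \<rho> l m)"
  unfolding assignments_def by (rule finite_subset[OF _ finite_PiE[of "{..<length \<rho>}" "\<lambda>_. {..<l}"]]) auto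

lemma sum_fiber_snoc:
  "(\<Sum>t | t < Suc (length xs) \<and> f t = v. (xs @ [x]) ! t)
    = (\<Sum>t | t < length xs \<and> f t = v. xs ! t) + (if f (length xs) = v then x else 0)"
proof -
  have "{t. t < Suc (length xs) \<and> f t = v} = {t. t < length xs \<and> f t = v} \<union> (if f (length xs) = v then {length xs} else {})"
    by (auto simp: less_Suc_eq)
  moreover have "(\<Sum>t | t < length xs \<and> f t = v. (xs @ [x]) ! t) = (\<Sum>t | t < length xs \<and> f t = v. xs ! t)"
    by (intro sum.cong) (auto simp: nth_append)
  ultimately show ?thesis by (simp add: sum.union_disjoint)
qed

lemma bij_betw_assignments_snoc:
  "bij_betw (\<lambda>f. (f (length xs), f(length xs := undefined))) (assignments (xs @ [x]) l m)
     (SIGMA w:{..<l}. assignments xs l (m(w := m w - int x)))"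
proof (rule bij_betwI[where g="\<lambda>(w, g). g(length xs := w)"])
  define L where "L = length xs"
  have sum_upd: "(\<Sum>t | t < L \<and> (f(L := w)) t = v. xs ! t) = (\<Sum>t | t < L \<and> f t = v. xs ! t)"
    for f :: "nat \<Rightarrow> nat" and w v
    by (intro sum.cong) auto
  show "(\<lambda>f. (f (length xs), f(length xs := undefined))) \<in> assignments (xs @ [x]) l m
      \<rightarrow> (SIGMA w:{..<l}. assignments xs l (m(w := m w - int x)))"
  proof
    fix f assume f: "f \<in> assignments (xs @ [x]) l m"
    then have "int (\<Sum>t | t < Suc L \<and> f t = v. (xs @ [x]) ! t) = m v" if "v < l" for v
      using that unfolding assignments_def L_def by (simp del: of_nat_sum)
    moreover have "int (\<Sum>t | t < L \<and> (f(L := undefined)) t = v. xs ! t)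
        = int (\<Sum>t | t < Suc L \<and> f t = v. (xs @ [x]) ! t) - (if f L = v then int x else 0)" for v
      unfolding sum_upd unfolding L_def sum_fiber_snoc by simp
    ultimately have "int (\<Sum>t | t < L \<and> (f(L := undefined)) t = v. xs ! t) = (m(f L := m (f L) - int x)) v"
      if "v < l" for v
      using that by simp
    moreover have "f L < l" "f(L := undefined) \<in> {..<L} \<rightarrow>\<^sub>E {..<l}"
      using f unfolding assignments_def PiE_iff extensional_def L_def by auto
    ultimately show "(f (length xs), f(length xs := undefined)) \<in> (SIGMA w:{..<l}. assignments xs l (m(w := m w - int x)))"
      unfolding assignments_def L_def by (auto simp del: of_nat_sum fun_upd_apply)
  qed
  show "(\<lambda>(w, g). g(length xs := w)) \<in> (SIGMA w:{..<l}. assignments xs l (m(w := m w - int x)))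
      \<rightarrow> assignments (xs @ [x]) l m"
  proof
    fix p assume "p \<in> (SIGMA w:{..<l}. assignments xs l (m(w := m w - int x)))"
    then obtain w g where p: "p = (w, g)" "w < l" "g \<in> assignments xs l (m(w := m w - int x))" by auto
    then have "g \<in> {..<L} \<rightarrow>\<^sub>E {..<l}" unfolding assignments_def L_def by blast
    moreover have "int (\<Sum>t | t < Suc L \<and> (g(L := w)) t = v. (xs @ [x]) ! t) = m v" if "v < l" for v
      using p that sum_fiber_snoc[where f="g(L := w)" and v=v and xs=xs and x=x] sum_upd[of g w v] unfolding assignments_def L_def
      by (cases "v = w") auto
    ultimately show "(\<lambda>(w, g). g(length xs := w)) p \<in> assignments (xs @ [x]) l m"
      using p unfolding assignments_def PiE_iff extensional_def L_def by auto
  qed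
  show "(\<lambda>(w, g). g(length xs := w)) (f (length xs), f(length xs := undefined)) = f" for f
    by auto
  show "(\<lambda>f. (f (length xs), f(length xs := undefined))) ((\<lambda>(w, g). g(length xs := w)) p) = p"
    if "p \<in> (SIGMA w:{..<l}. assignments xs l (m(w := m w - int x)))" for p
    using that unfolding assignments_def PiE_iff extensional_def by auto
qed

lemma psum_coeff_snoc:
  "psum_coeff (xs @ [x]) l m = (\<Sum>w<l. psum_coeff xs l (m(w := m w - int x)))"
  unfolding psum_coeff_eq_card bij_betw_same_card[OF bij_betw_assignments_snoc]
  by (simp add: card_SigmaI finite_assignments)

lemma psum_coeff_Cons:
  "psum_coeff (x # xs) l m = (\<Sum>w<l. psum_coeff xs l (m(w := m w - int x)))"
proof (induction xs arbitrary: m rule: rev_induct)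
  case Nil
  show ?case using psum_coeff_snoc[of "[]" x l m] by (simp del: fun_upd_apply)
next
  case (snoc y xs)
  have "psum_coeff (x # xs @ [y]) l m = (\<Sum>u<l. psum_coeff (x # xs) l (m(u := m u - int y)))"
    using psum_coeff_snoc[of "x # xs"] by (simp del: fun_upd_apply)
  also have "\<dots> = (\<Sum>u<l. \<Sum>w<l. psum_coeff xs l ((m(u := m u - int y))(w := (m(u := m u - int y)) w - int x)))"
    by (simp only: snoc)
  also have "\<dots> = (\<Sum>w<l. \<Sum>u<l. psum_coeff xs l ((m(w := m w - int x))(u := (m(w := m w - int x)) u - int y)))"
    by (subst sum.swap) (intro sum.cong refl arg_cong[where f="psum_coeff xs l"], auto)
  also have "\<dots> = (\<Sum>w<l. psum_coeff (xs @ [y]) l (m(w := m w - int x)))"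
    by (simp only: psum_coeff_snoc)
  finally show ?case .
qed

lemma psum_coeff_cong: "(\<And>v. v < l \<Longrightarrow> m v = m' v) \<Longrightarrow> psum_coeff xs l m = psum_coeff xs l m'"
  unfolding psum_coeff_def by (intro arg_cong[where f=card]) auto

lemma psum_coeff_eq_0_if_neg:
  assumes "v < l" and "m v < 0"
  shows "psum_coeff xs l m = 0"
proof -
  have "int s \<noteq> m v" for s using assms(2) by linarith
  then have "{f \<in> {..<length xs} \<rightarrow>\<^sub>E {..<l}.
      \<forall>v<l. int (\<Sum>t\<in>{t. t < length xs \<and> f t = v}. xs ! t) = m v} = {}"
    using assms(1) by blast
  then show ?thesis unfolding psum_coeff_def by (simp only: card.empty)
qed

lemma psum_coeff_permute:
  assumes "\<pi> permutes {..<l}"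
  shows "psum_coeff xs l (m \<circ> \<pi>) = psum_coeff xs l m"
proof (induction xs arbitrary: m rule: rev_induct)
  case Nil
  have "(\<forall>v<l. m (\<pi> v) = 0) \<longleftrightarrow> (\<forall>v<l. m v = 0)"
    using permutes_in_image[OF assms] permutes_surj[OF assms]
    by (metis lessThan_iff permutes_inv_eq[OF assms] permutes_in_image[OF permutes_inv[OF assms]])
  then show ?case by (simp add: psum_coeff_Nil)
next
  case (snoc x xs)
  have upd: "(m \<circ> \<pi>)(w := m (\<pi> w) - int x) = m(\<pi> w := m (\<pi> w) - int x) \<circ> \<pi>" for w
    using permutes_inj[OF assms] by (auto simp: fun_eq_iff dest: injD)
  have "psum_coeff (xs @ [x]) l (m \<circ> \<pi>) = (\<Sum>w<l. psum_coeff xs l (m(\<pi> w := m (\<pi> w) - int x) \<circ> \<pi>))"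
    unfolding psum_coeff_snoc upd[symmetric] by simp
  also have "\<dots> = (\<Sum>w<l. psum_coeff xs l (m(\<pi> w := m (\<pi> w) - int x)))"
    by (simp only: snoc)
  also have "\<dots> = psum_coeff (xs @ [x]) l m"
    using sum.permute[OF assms, of "\<lambda>w. psum_coeff xs l (m(w := m w - int x))"]
    by (simp add: psum_coeff_snoc)
  finally show ?case .
qed

lemma psum_coeff_one_var:
  assumes "\<forall>x\<in>set xs. 1 \<le> x" and "0 < l" and "\<And>v. 0 < v \<Longrightarrow> v < l \<Longrightarrow> m v = 0"
  shows "psum_coeff xs l m = of_bool (m 0 = int (sum_list xs))"
  using assms
proof (induction xs arbitrary: m)
  case Nil
  then have "(\<forall>v<l. m v = 0) \<longleftrightarrow> m 0 = 0" by (metis gr0I)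
  then show ?case by (simp add: psum_coeff_Nil)
next
  case (Cons x xs)
  have "psum_coeff xs l (m(w := m w - int x)) = 0" if "0 < w" "w < l" for w
    using Cons.prems that by (intro psum_coeff_eq_0_if_neg[of w]) auto
  then have "psum_coeff (x # xs) l m = psum_coeff xs l (m(0 := m 0 - int x))"
    using \<open>0 < l\<close> by (simp add: psum_coeff_Cons sum.remove[of _ 0])
  also have "\<dots> = of_bool (m 0 - int x = int (sum_list xs))"
    by (subst Cons.IH) (use Cons.prems in auto)
  finally show ?case by auto
qed

section \<open>The Frobenius formula for integer vectors\<close>

text \<open>The Frobenius formula extended to an arbitrary integer vector \<open>\<nu>\<close> with \<open>l\<close> entries:
  the coefficient of \<open>x\<^sup>\<nu>\<^sup>+\<^sup>\<delta>\<close> in \<open>a\<^sub>\<delta> p\<^sub>\<rho>\<close>. The exponent \<open>\<nu>\<^sub>v + \<delta>\<^sub>v - \<delta>\<^sub>\<sigma>\<^sub>(\<^sub>v\<^sub>)\<close>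
  with \<open>\<delta>\<^sub>v = l - 1 - v\<close> is written as \<open>\<nu>\<^sub>v + \<sigma>(v) - v\<close>.\<close>
definition gen_char :: "nat \<Rightarrow> (nat \<Rightarrow> int) \<Rightarrow> nat list \<Rightarrow> int" where
  "gen_char l \<nu> \<rho> =
     (\<Sum>\<sigma> | \<sigma> permutes {..<l}. sign \<sigma> * int (psum_coeff \<rho> l (\<lambda>v. \<nu> v + int (\<sigma> v) - int v)))"

lemma character_eq_gen_char:
  "character lam n a = gen_char (length lam) (\<lambda>v. int (lam ! v)) (cycle_list n a)"
  unfolding character_def Let_def gen_char_def
proof (intro sum.cong refl arg_cong2[where f="(*)"] arg_cong[where f=int] psum_coeff_cong)
  fix \<sigma> v assume "\<sigma> \<in> {\<sigma>. \<sigma> permutes {..<length lam}}" and v: "v < length lam"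
  then have "\<sigma> v < length lam" using permutes_in_image by fastforce
  then show "int (lam ! v) + int (length lam - 1 - v) - int (length lam - 1 - \<sigma> v) =
      int (lam ! v) + int (\<sigma> v) - int v" using v by simp
qed

lemma gen_char_cong: "(\<And>v. v < l \<Longrightarrow> \<nu> v = \<nu>' v) \<Longrightarrow> gen_char l \<nu> \<rho> = gen_char l \<nu>' \<rho>"
  unfolding gen_char_def
  by (intro sum.cong refl arg_cong2[where f="(*)"] arg_cong[where f=int] psum_coeff_cong) auto

lemma gen_char_eq_0_if_row_neg:
  assumes "v < l" and "\<nu> v + int l - 1 - int v < 0"
  shows "gen_char l \<nu> \<rho> = 0"
  unfolding gen_char_def
proof (intro sum.neutral ballI)
  fix \<sigma> assume "\<sigma> \<in> {\<sigma>. \<sigma> permutes {..<l}}"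
  then have "\<sigma> v < l" using assms(1) permutes_in_image by fastforce
  then show "sign \<sigma> * int (psum_coeff \<rho> l (\<lambda>v. \<nu> v + int (\<sigma> v) - int v)) = 0"
    using assms by (simp add: psum_coeff_eq_0_if_neg[of v])
qed

lemma gen_char_Cons: "gen_char l \<nu> (x # \<rho>) = (\<Sum>w<l. gen_char l (\<nu>(w := \<nu> w - int x)) \<rho>)"
  unfolding gen_char_def psum_coeff_Cons of_nat_sum sum_distrib_left
  by (subst sum.swap) (intro sum.cong refl arg_cong2[where f="(*)"] arg_cong[where f=int]
      arg_cong[where f="psum_coeff \<rho> l"], auto)

lemma gen_char_snoc: "gen_char l \<nu> (\<rho> @ [x]) = (\<Sum>w<l. gen_char l (\<nu>(w := \<nu> w - int x)) \<rho>)"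
  unfolding gen_char_def psum_coeff_snoc of_nat_sum sum_distrib_left
  by (subst sum.swap) (intro sum.cong refl arg_cong2[where f="(*)"] arg_cong[where f=int]
      arg_cong[where f="psum_coeff \<rho> l"], auto)

text \<open>Straightening: exchanging \<open>\<nu>\<^sub>v + \<delta>\<^sub>v\<close> and \<open>\<nu>\<^sub>v\<^sub>+\<^sub>1 + \<delta>\<^sub>v\<^sub>+\<^sub>1\<close> changes the sign.\<close>
lemma gen_char_swap_rows:
  assumes v: "v + 1 < l" and "\<nu>' v = \<nu> (v + 1) - 1" and "\<nu>' (v + 1) = \<nu> v + 1"
    and "\<And>u. u < l \<Longrightarrow> u \<noteq> v \<Longrightarrow> u \<noteq> v + 1 \<Longrightarrow> \<nu>' u = \<nu> u"
  shows "gen_char l \<nu>' \<rho> = - gen_char l \<nu> \<rho>"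
proof -
  define s where "s = Transposition.transpose v (v + 1)"
  have s: "s permutes {..<l}" unfolding s_def using v by (intro permutes_swap_id) auto
  have sign_comp: "sign (\<sigma> \<circ> s) = - sign \<sigma>" if "\<sigma> permutes {..<l}" for \<sigma>
    using sign_compose[OF permutes_imp_permutation[OF _ that] permutes_imp_permutation[OF _ s]]
    by (simp add: s_def sign_swap_id)
  have psum_comp: "psum_coeff \<rho> l (\<lambda>u. \<nu>' u + int ((\<sigma> \<circ> s) u) - int u)
      = psum_coeff \<rho> l (\<lambda>u. \<nu> u + int (\<sigma> u) - int u)" for \<sigma>
  proof -
    have "psum_coeff \<rho> l (\<lambda>u. \<nu>' u + int ((\<sigma> \<circ> s) u) - int u)
        = psum_coeff \<rho> l ((\<lambda>u. \<nu> u + int (\<sigma> u) - int u) \<circ> s)"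
      using assms by (intro psum_coeff_cong) (auto simp: s_def Transposition.transpose_def)
    then show ?thesis by (simp add: psum_coeff_permute[OF s])
  qed
  have "gen_char l \<nu>' \<rho> = (\<Sum>\<sigma> | \<sigma> permutes {..<l}.
      sign (\<sigma> \<circ> s) * int (psum_coeff \<rho> l (\<lambda>u. \<nu>' u + int ((\<sigma> \<circ> s) u) - int u)))"
    unfolding gen_char_def by (rule sum_permutations_compose_right[OF s])
  also have "\<dots> = (\<Sum>\<sigma> | \<sigma> permutes {..<l}.
      - (sign \<sigma> * int (psum_coeff \<rho> l (\<lambda>u. \<nu> u + int (\<sigma> u) - int u))))"
    by (intro sum.cong refl) (simp only: mem_Collect_eq sign_comp psum_comp mult_minus_left)
  finally show ?thesis unfolding gen_char_def by (simp add: sum_negf)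
qed

lemma gen_char_eq_0_if_rows_clash:
  assumes "v + 1 < l" and "\<nu> (v + 1) = \<nu> v + 1"
  shows "gen_char l \<nu> \<rho> = 0"
  using gen_char_swap_rows[of v l \<nu> \<nu>] assms by simp

lemma gen_char_Nil:
  assumes \<sigma>: "\<sigma> permutes {..<l}" and \<nu>: "\<And>v. v < l \<Longrightarrow> \<nu> v = int v - int (\<sigma> v)"
  shows "gen_char l \<nu> [] = sign \<sigma>"
proof -
  have "(\<forall>v<l. \<nu> v + int (\<tau> v) - int v = 0) \<longleftrightarrow> \<tau> = \<sigma>" if \<tau>: "\<tau> permutes {..<l}" for \<tau>
  proof
    assume "\<forall>v<l. \<nu> v + int (\<tau> v) - int v = 0"
    then have "\<tau> v = \<sigma> v" for v
      using \<nu> permutes_not_in[OF \<tau>, of v] permutes_not_in[OF \<sigma>, of v] by (cases "v < l") auto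
    then show "\<tau> = \<sigma>" ..
  qed (use \<nu> in auto)
  then have "gen_char l \<nu> [] = (\<Sum>\<tau> | \<tau> permutes {..<l}. if \<tau> = \<sigma> then sign \<tau> else 0)"
    unfolding gen_char_def psum_coeff_Nil by (intro sum.cong) auto
  also have "\<dots> = sign \<sigma>" using \<sigma> by (simp add: sum.delta' finite_permutations)
  finally show ?thesis .
qed

lemma gen_char_Nil_eq_0: "0 < l \<Longrightarrow> 0 < \<nu> 0 \<Longrightarrow> gen_char l \<nu> [] = 0"
  unfolding gen_char_def psum_coeff_Nil by (intro sum.neutral ballI) auto

text \<open>The one-row case: every \<open>\<sigma> \<noteq> id\<close> moves some row \<open>v > 0\<close> up, making its exponent negative.\<close>
lemma gen_char_one_row:
  assumes "\<forall>x\<in>set \<rho>. 1 \<le> x" and "0 < l" and "\<And>v. 0 < v \<Longrightarrow> v < l \<Longrightarrow> \<nu> v = 0"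
  shows "gen_char l \<nu> \<rho> = of_bool (\<nu> 0 = int (sum_list \<rho>))"
proof -
  have "sign \<sigma> * int (psum_coeff \<rho> l (\<lambda>v. \<nu> v + int (\<sigma> v) - int v)) = 0"
    if \<sigma>: "\<sigma> permutes {..<l}" "\<sigma> \<noteq> id" for \<sigma>
  proof -
    obtain v where "v < l" "\<sigma> v < v" using permutes_natset_ge[OF \<sigma>(1)] \<sigma>(2) by (meson lessThan_iff not_le)
    then show ?thesis using assms(3) by (simp add: psum_coeff_eq_0_if_neg[of v])
  qed
  then have "gen_char l \<nu> \<rho> = (\<Sum>\<sigma> | \<sigma> permutes {..<l}. if \<sigma> = id then int (psum_coeff \<rho> l \<nu>) else 0)"
    unfolding gen_char_def by (intro sum.cong) auto
  also have "\<dots> = int (psum_coeff \<rho> l \<nu>)" by (simp add: sum.delta' finite_permutations permutes_id)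
  finally show ?thesis using psum_coeff_one_var[OF assms] by simp
qed

section \<open>Classes agreeing on the cycles shorter than \<open>i\<close>\<close>

text \<open>The first entry is an integer, so that parts may be removed from the first row freely.\<close>
definition hook2_vec :: "int \<Rightarrow> nat \<Rightarrow> nat \<Rightarrow> nat \<Rightarrow> int" where
  "hook2_vec a b j v = (if v = 0 then a else if v = 1 then int b else if v \<le> j + 1 then 1 else 0)"

lemma sum_lessThan_add_2: "(\<Sum>w<(k::nat) + 2. g w) = g 0 + g 1 + (\<Sum>w<k. g (w + 2))"
  by (simp only: add_2_eq_Suc' sum.lessThan_Suc_shift) (simp add: add.assoc)

lemma character_hook2:
  assumes "k < i" and "i \<le> n"
  shows "character (hook2 n i k) n c = gen_char (k + 2) (hook2_vec (int (n - i)) (i - k) k) (cycle_list n c)"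
proof -
  have "length (hook2 n i k) = k + 2" by (simp add: hook2_def)
  moreover have "int (hook2 n i k ! v) = hook2_vec (int (n - i)) (i - k) k v" if "v < k + 2" for v
    using that assms by (cases "v < 2") (auto simp: hook2_def hook2_vec_def nth_append less_2_cases_iff)
  ultimately show ?thesis unfolding character_eq_gen_char by (auto intro: gen_char_cong)
qed

text \<open>A negative entry \<open>t - k\<close> in row \<open>t + 1\<close> below rows equal to \<open>0\<close> is moved down by
  straightening, one sign change per step, until the vector becomes \<open>(N, 0, \<dots>, 0)\<close>.\<close>
lemma gen_char_slide:
  assumes "\<forall>x\<in>set \<rho>. 1 \<le> x" and "t \<le> k"
  shows "gen_char (k + 2) (\<lambda>v. if v = 0 then N else if v \<le> t then 0 else if v = t + 1 then int t - int k else 1) \<rho>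
    = (-1) ^ (k - t) * of_bool (N = int (sum_list \<rho>))"
  using assms(2)
proof (induction "k - t" arbitrary: t)
  case 0
  then show ?case by (subst gen_char_one_row[OF assms(1)]) auto
next
  case (Suc d)
  define \<nu> where "\<nu> t = (\<lambda>v. if v = 0 then N else if v \<le> t then 0 else if v = t + 1 then int t - int k else 1)"
    for t :: nat
  have "gen_char (k + 2) (\<nu> t) \<rho> = - gen_char (k + 2) (\<nu> (t + 1)) \<rho>"
    using Suc.hyps(2) by (intro gen_char_swap_rows[of "t + 1"]) (auto simp: \<nu>_def)
  moreover have "(-1) ^ (k - t) = - ((-1::int) ^ (k - (t + 1)))"
    using Suc.hyps(2) by (metis Suc_diff_Suc Suc_eq_plus1 mult_minus1 power_Suc zero_less_Suc zero_less_diff)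
  ultimately show ?case using Suc.hyps unfolding \<nu>_def by simp
qed

text \<open>Removing a part \<open>x \<ge> i\<close>: the rows \<open>v \<ge> 2\<close> cannot absorb it, row \<open>1\<close> can only if \<open>x = i\<close>
  (leaving the vector of \<open>gen_char_slide\<close> with \<open>t = 0\<close>), and row \<open>0\<close> just decreases.\<close>
lemma gen_char_hook2_vec_append_large_parts:
  assumes k: "1 \<le> k" "k < i" and S: "\<forall>x\<in>set S. 1 \<le> x" and R: "\<forall>x\<in>set R. i \<le> x"
    and "int (sum_list S) + int (sum_list R) = N + int i"
  shows "gen_char (k + 2) (hook2_vec N (i - k) k) (S @ R)
    = gen_char (k + 2) (hook2_vec (N - int (sum_list R)) (i - k) k) S + (-1) ^ k * int (count_list R i)"
  using R assms(5)
proof (induction R arbitrary: N rule: rev_induct)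
  case Nil
  then show ?case by simp
next
  case (snoc x R)
  define g where "g w = gen_char (k + 2) ((hook2_vec N (i - k) k)(w := hook2_vec N (i - k) k w - int x)) (S @ R)" for w
  have xi: "i \<le> x" using snoc.prems by simp
  have "gen_char (k + 2) (hook2_vec N (i - k) k) (S @ R @ [x]) = g 0 + g 1 + (\<Sum>w<k. g (w + 2))"
    unfolding append_assoc[symmetric] gen_char_snoc g_def sum_lessThan_add_2 ..
  also have "(\<Sum>w<k. g (w + 2)) = 0"
    unfolding g_def using xi k by (intro sum.neutral ballI gen_char_eq_0_if_row_neg[of "_ + 2"]) (auto simp: hook2_vec_def)
  also have "g 0 = gen_char (k + 2) (hook2_vec (N - int x - int (sum_list R)) (i - k) k) S + (-1) ^ k * int (count_list R i)"
    unfolding g_def using snoc.prems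
    by (subst snoc.IH[symmetric]) (auto intro!: gen_char_cong simp: hook2_vec_def)
  also have "g 1 = (-1) ^ k * of_bool (x = i)"
  proof (cases "x = i")
    case True
    have "\<forall>x\<in>set (S @ R). 1 \<le> x" using S snoc.prems k by force
    moreover have "g 1 = gen_char (k + 2)
        (\<lambda>v. if v = 0 then N else if v \<le> 0 then 0 else if v = 0 + 1 then int 0 - int k else 1) (S @ R)"
      unfolding g_def using True k by (intro gen_char_cong) (auto simp: hook2_vec_def)
    ultimately show ?thesis using gen_char_slide[of "S @ R" 0 k N] True snoc.prems by simp
  next
    case False
    then show ?thesis unfolding g_def using xi k
      by (auto intro!: gen_char_eq_0_if_row_neg[of 1] simp: hook2_vec_def)
  qed
  finally show ?case by (simp add: algebra_simps)
qed

lemma sum_list_cycle_list: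
  assumes "cycle_type n a"
  shows "sum_list (cycle_list n a) = n"
proof -
  have "sum_list (concat (map (\<lambda>j. replicate (a j) j) js)) = (\<Sum>j\<leftarrow>js. a j * j)" for js
    by (induction js) (auto simp: sum_list_replicate)
  then have "sum_list (cycle_list n a) = (\<Sum>j\<leftarrow>[1..<Suc n]. a j * j)"
    unfolding cycle_list_def .
  also have "\<dots> = (\<Sum>j = 1..n. a j * j)"
    by (simp only: sum_set_upt_conv_sum_list_nat[symmetric] set_upt atLeastLessThanSuc_atLeastAtMost)
  finally show ?thesis using assms unfolding cycle_type_def by (simp add: mult.commute)
qed

lemma cycle_list_split:
  assumes "1 \<le> i" and "i \<le> n"
  shows "cycle_list n a = concat (map (\<lambda>j. replicate (a j) j) [1..<i]) @ concat (map (\<lambda>j. replicate (a j) j) [i..<Suc n])"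
  using assms upt_add_eq_append[of 1 i "Suc n - i"] by (simp add: cycle_list_def)

lemma count_list_cycles_from:
  assumes "i \<le> n"
  shows "count_list (concat (map (\<lambda>j. replicate (a j) j) [i..<Suc n])) i = a i"
proof -
  have "count_list (concat (map (\<lambda>j. replicate (a j) j) [Suc i..<Suc n])) i = 0"
    by (rule count_notin) auto
  moreover have "count_list (replicate m i) i = m" for m by (induction m) auto
  ultimately show ?thesis using assms by (simp add: upt_conv_Cons del: upt_Suc)
qed

lemma cycle_list_id_class: "1 \<le> n \<Longrightarrow> cycle_list n (id_class n) = replicate n 1"
  by (auto simp: cycle_list_def id_class_def upt_conv_Cons simp del: upt_Suc intro!: concat_eq_Nil_conv[THEN iffD2])

lemma cycle_list_transp_class: "2 \<le> n \<Longrightarrow> cycle_list n (transp_class n) = replicate (n - 2) 1 @ [2]"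
  by (auto simp: cycle_list_def transp_class_def upt_conv_Cons numeral_2_eq_2 simp del: upt_Suc)

text \<open>Both cycle lists end with their parts \<open>\<ge> i\<close>, which are removed first and contribute only
  through the number of \<open>i\<close>-cycles; what remains is the same for both classes.\<close>
lemma character_hook2_diff:
  assumes "1 \<le> k" and "k < i" and "i \<le> n"
    and a: "cycle_type n a" and b: "cycle_type n b"
    and ab: "\<And>j. 1 \<le> j \<Longrightarrow> j < i \<Longrightarrow> a j = b j"
  shows "character (hook2 n i k) n a - character (hook2 n i k) n b = (-1) ^ k * (int (a i) - int (b i))"
proof -
  define S where "S = concat (map (\<lambda>j. replicate (a j) j) [1..<i])"
  define R where "R c = concat (map (\<lambda>j. replicate (c j) j) [i..<Suc n])" for c
  have S_b: "S = concat (map (\<lambda>j. replicate (b j) j) [1..<i])"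
    unfolding S_def by (intro arg_cong[where f=concat] map_cong) (auto simp: ab)
  have "1 \<le> i" using assms by simp
  have char: "character (hook2 n i k) n c = gen_char (k + 2) (hook2_vec (int (n - i) - int (sum_list (R c))) (i - k) k) S
      + (-1) ^ k * int (c i)"
    if c: "cycle_type n c" and split: "cycle_list n c = S @ R c" for c
  proof -
    have "int (sum_list S) + int (sum_list (R c)) = int (n - i) + int i"
      using sum_list_cycle_list[OF c] split \<open>i \<le> n\<close> by simp
    moreover have "\<forall>x\<in>set S. 1 \<le> x" "\<forall>x\<in>set (R c). i \<le> x" unfolding S_def R_def by auto
    ultimately show ?thesis
      unfolding character_hook2[OF \<open>k < i\<close> \<open>i \<le> n\<close>] split
      using gen_char_hook2_vec_append_large_parts[OF \<open>1 \<le> k\<close> \<open>k < i\<close>]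
        count_list_cycles_from[OF \<open>i \<le> n\<close>, of c, folded R_def] by simp
  qed
  have split_a: "cycle_list n a = S @ R a"
    unfolding S_def R_def by (rule cycle_list_split[OF \<open>1 \<le> i\<close> \<open>i \<le> n\<close>])
  have split_b: "cycle_list n b = S @ R b"
    unfolding S_b R_def by (rule cycle_list_split[OF \<open>1 \<le> i\<close> \<open>i \<le> n\<close>])
  have "sum_list (R a) = sum_list (R b)"
    using sum_list_cycle_list[OF a] sum_list_cycle_list[OF b] split_a split_b by simp
  then show ?thesis using char[OF a split_a] char[OF b split_b] by (simp add: algebra_simps)
qed

section \<open>Hook length formula and contents of \<open>[a, b, 1\<^sup>j]\<close>\<close>

text \<open>The hook length formula for the diagram \<open>[a, b, 1\<^sup>j]\<close>; for \<open>b = 0\<close> the truncated \<open>b + j - 1\<close>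
  makes it \<open>1\<close> if \<open>j = 0\<close> and \<open>0\<close> otherwise.\<close>
definition hook2_dim :: "nat \<Rightarrow> nat \<Rightarrow> nat \<Rightarrow> real" where
  "hook2_dim a b j = real ((a + b + j) choose (b + j)) * real ((b + j - 1) choose j)
     * (real a - real b + 1) / (real a + real j + 1)"

text \<open>Twice the sum of the contents of the boxes of \<open>[a, b, 1\<^sup>j]\<close>.\<close>
definition twice_contents :: "nat \<Rightarrow> nat \<Rightarrow> nat \<Rightarrow> real" where
  "twice_contents a b j = real a * (real a - 1) + real b * (real b - 3) - (real j + 1) * (real j + 2) + 2"

lemma hook2_dim_one_row: "hook2_dim a 0 0 = 1"
  by (simp add: hook2_dim_def add_pos_nonneg)

lemma hook2_dim_two_rows_1: "hook2_dim a 1 0 = real a"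
  by (simp add: hook2_dim_def field_simps)

lemma hook2_dim_eq_0_rows: "1 \<le> b \<Longrightarrow> hook2_dim (b - 1) b j = 0"
  by (simp add: hook2_dim_def of_nat_diff)

lemma hook2_dim_eq_0_column: "1 \<le> j \<Longrightarrow> hook2_dim a 0 j = 0"
  by (simp add: hook2_dim_def)

text \<open>\<open>r\<close> and \<open>r\<^sub>0, r\<^sub>1, r\<^sub>2\<close> are, up to a common factor, the dimensions of \<open>[a, b, 1\<^sup>j]\<close> and of
  the diagrams obtained by removing the corner of row \<open>0\<close>, of row \<open>1\<close> and of the column; these
  corners have contents \<open>A - 1\<close>, \<open>B - 2\<close> and \<open>-(J + 1)\<close>.\<close>
lemma hook2_ratio_identities:
  fixes A B J c :: real
  assumes "A + J \<noteq> 0" and "A + J + 1 \<noteq> 0" and "A + B + J \<noteq> 0" and "B + J - 1 \<noteq> 0"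
  defines "r \<equiv> (A - B + 1) / (A + J + 1)"
    and "r\<^sub>0 \<equiv> A / (A + B + J) * (A - B) / (A + J)"
    and "r\<^sub>1 \<equiv> (B + J) / (A + B + J) * (B - 1) / (B + J - 1) * (A - B + 2) / (A + J + 1)"
    and "r\<^sub>2 \<equiv> (B + J) / (A + B + J) * J / (B + J - 1) * (A - B + 1) / (A + J)"
  shows "c * r = c * r\<^sub>0 + c * r\<^sub>1 + c * r\<^sub>2"
    and "c * r\<^sub>0 * (A - 1) + c * r\<^sub>1 * (B - 2) - c * r\<^sub>2 * (J + 1)
      = (A * (A - 1) + B * (B - 3) - (J + 1) * (J + 2) + 2) * (c * r) / (A + B + J)"
proof -
  define N P Q Q' where "N = A + B + J" and "P = B + J - 1" and "Q = A + J" and "Q' = A + J + 1"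
  have nz: "N \<noteq> 0" "P \<noteq> 0" "Q \<noteq> 0" "Q' \<noteq> 0" using assms(1-4) by (simp_all add: N_def P_def Q_def Q'_def)
  have "(A - B + 1) / Q' = A / N * (A - B) / Q + (B + J) / N * (B - 1) / P * (A - B + 2) / Q'
    + (B + J) / N * J / P * (A - B + 1) / Q"
    by (simp add: field_simps nz, unfold N_def P_def Q_def Q'_def, algebra)
  then show "c * r = c * r\<^sub>0 + c * r\<^sub>1 + c * r\<^sub>2"
    unfolding r_def r\<^sub>0_def r\<^sub>1_def r\<^sub>2_def N_def P_def Q_def Q'_def by (simp add: distrib_left)
  have "c * (A / N * (A - B) / Q) * (A - 1) + c * ((B + J) / N * (B - 1) / P * (A - B + 2) / Q') * (B - 2)
      - c * ((B + J) / N * J / P * (A - B + 1) / Q) * (J + 1)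
    = (A * (A - 1) + B * (B - 3) - (J + 1) * (J + 2) + 2) * (c * ((A - B + 1) / Q')) / N"
    by (simp add: field_simps nz, unfold N_def P_def Q_def Q'_def, algebra)
  then show "c * r\<^sub>0 * (A - 1) + c * r\<^sub>1 * (B - 2) - c * r\<^sub>2 * (J + 1)
      = (A * (A - 1) + B * (B - 3) - (J + 1) * (J + 2) + 2) * (c * r) / (A + B + J)"
    unfolding r_def r\<^sub>0_def r\<^sub>1_def r\<^sub>2_def N_def P_def Q_def Q'_def .
qed

lemma hook2_dim_neighbours:
  assumes "1 \<le> a" and "1 \<le> b" and "2 \<le> b + j"
  obtains c where
    "hook2_dim a b j = c * ((real a - real b + 1) / (real a + real j + 1))"
    "hook2_dim (a - 1) b j = c * (real a / (real a + real b + real j) * (real a - real b) / (real a + real j))"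
    "hook2_dim a (b - 1) j = c * ((real b + real j) / (real a + real b + real j) * (real b - 1)
       / (real b + real j - 1) * (real a - real b + 2) / (real a + real j + 1))"
    "(if 1 \<le> j then hook2_dim a b (j - 1) else 0) = c * ((real b + real j) / (real a + real b + real j)
       * real j / (real b + real j - 1) * (real a - real b + 1) / (real a + real j))"
proof
  define n p where "n = a + b + j" and "p = b + j"
  define X U where "X = real (n choose p)" and "U = real ((p - 1) choose j)"
  have n: "0 < real n" "real n = real a + real b + real j" and p: "real (p - 1) = real b + real j - 1" "0 < real (p - 1)"
    using assms by (auto simp: n_def p_def of_nat_diff)
  have Y: "real ((n - 1) choose p) = real a * X / (real a + real b + real j)"
    using binomial_absorb_comp[of n p] n unfolding X_def
    by (simp add: field_simps p_def n_def flip: of_nat_mult)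
  have Z: "real ((n - 1) choose (p - 1)) = (real b + real j) * X / (real a + real b + real j)"
    using times_binomial_minus1_eq[of p n] assms n unfolding X_def
    by (simp add: field_simps p_def n_def flip: of_nat_mult)
  have "real (b - 1) * U = real (p - 1) * real ((p - 2) choose j)"
    using binomial_absorb_comp[of "p - 1" j] unfolding U_def p_def
    by (simp add: numeral_2_eq_2 flip: of_nat_mult)
  then have V: "real ((p - 2) choose j) = (real b - 1) * U / (real b + real j - 1)"
    using p assms by (simp add: field_simps of_nat_diff)
  have "real j * U = real (p - 1) * real ((p - 2) choose (j - 1))" if "1 \<le> j"
    using times_binomial_minus1_eq[of j "p - 1"] that unfolding U_def
    by (simp add: numeral_2_eq_2 flip: of_nat_mult)
  then have W: "real ((p - 2) choose (j - 1)) = real j * U / (real b + real j - 1)" if "1 \<le> j"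
    using p that by (simp add: field_simps)
  show "hook2_dim a b j = X * U * ((real a - real b + 1) / (real a + real j + 1))"
    unfolding hook2_dim_def X_def U_def n_def p_def by simp
  show "hook2_dim (a - 1) b j = X * U * (real a / (real a + real b + real j) * (real a - real b) / (real a + real j))"
    using assms Y unfolding hook2_dim_def U_def n_def p_def by (simp add: algebra_simps of_nat_diff)
  show "hook2_dim a (b - 1) j = X * U * ((real b + real j) / (real a + real b + real j) * (real b - 1)
       / (real b + real j - 1) * (real a - real b + 2) / (real a + real j + 1))"
    using assms Z V unfolding hook2_dim_def n_def p_def by (simp add: algebra_simps of_nat_diff numeral_2_eq_2)
  show "(if 1 \<le> j then hook2_dim a b (j - 1) else 0) = X * U * ((real b + real j) / (real a + real b + real j)
       * real j / (real b + real j - 1) * (real a - real b + 1) / (real a + real j))"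
    using assms Z W unfolding hook2_dim_def n_def p_def
    by (cases "j = 0") (simp_all add: algebra_simps of_nat_diff numeral_2_eq_2)
qed

lemma hook2_dim_rec:
  assumes "1 \<le> a" and "1 \<le> b \<or> j = 0"
  shows "hook2_dim a b j = hook2_dim (a - 1) b j + (if 1 \<le> b then hook2_dim a (b - 1) j else 0)
    + (if 1 \<le> j then hook2_dim a b (j - 1) else 0)"
proof -
  consider "b = 0" "j = 0" | "b = 1" "j = 0" | "1 \<le> b" "2 \<le> b + j" using assms by linarith
  then show ?thesis
  proof cases
    case 3
    obtain c where D: "hook2_dim a b j = c * ((real a - real b + 1) / (real a + real j + 1))"
      "hook2_dim (a - 1) b j = c * (real a / (real a + real b + real j) * (real a - real b) / (real a + real j))"
      "hook2_dim a (b - 1) j = c * ((real b + real j) / (real a + real b + real j) * (real b - 1)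
         / (real b + real j - 1) * (real a - real b + 2) / (real a + real j + 1))"
      "(if 1 \<le> j then hook2_dim a b (j - 1) else 0) = c * ((real b + real j) / (real a + real b + real j)
         * real j / (real b + real j - 1) * (real a - real b + 1) / (real a + real j))"
      using hook2_dim_neighbours[OF \<open>1 \<le> a\<close> 3] .
    have "real a + real j \<noteq> 0" "real a + real j + 1 \<noteq> 0" "real a + real b + real j \<noteq> 0"
      "real b + real j - 1 \<noteq> 0"
      using assms 3 by linarith+
    from hook2_ratio_identities(1)[OF this] show ?thesis using 3 unfolding D by simp
  next
    case 1
    then show ?thesis by (simp add: hook2_dim_one_row)
  next
    case 2
    then show ?thesis using hook2_dim_two_rows_1[of a] hook2_dim_two_rows_1[of "a - 1"] assms
      by (simp add: hook2_dim_one_row of_nat_diff)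
  qed
qed

lemma hook2_dim_content_rec:
  assumes "1 \<le> a" and "1 \<le> b \<or> j = 0"
  shows "hook2_dim (a - 1) b j * (real a - 1) + (if 1 \<le> b then hook2_dim a (b - 1) j * (real b - 2) else 0)
    - (if 1 \<le> j then hook2_dim a b (j - 1) * (real j + 1) else 0)
    = twice_contents a b j * hook2_dim a b j / real (a + b + j)"
proof -
  consider "b = 0" "j = 0" | "b = 1" "j = 0" | "1 \<le> b" "2 \<le> b + j" using assms by linarith
  then show ?thesis
  proof cases
    case 1
    then show ?thesis using assms by (simp add: hook2_dim_one_row twice_contents_def field_simps)
  next
    case 2
    have "hook2_dim (a - 1) 1 0 = real a - 1"
      using hook2_dim_two_rows_1[of "a - 1"] assms by (simp add: of_nat_diff)
    moreover have "(real a - 1) * (real a - 1) - 1 = (real a * (real a - 1) - 2) * real a / (real a + 1)"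
      by (simp add: field_simps add_pos_nonneg)
    ultimately show ?thesis using 2 hook2_dim_two_rows_1[of a] by (simp add: hook2_dim_one_row twice_contents_def)
  next
    case 3
    obtain c where D: "hook2_dim a b j = c * ((real a - real b + 1) / (real a + real j + 1))"
      "hook2_dim (a - 1) b j = c * (real a / (real a + real b + real j) * (real a - real b) / (real a + real j))"
      "hook2_dim a (b - 1) j = c * ((real b + real j) / (real a + real b + real j) * (real b - 1)
         / (real b + real j - 1) * (real a - real b + 2) / (real a + real j + 1))"
      "(if 1 \<le> j then hook2_dim a b (j - 1) else 0) = c * ((real b + real j) / (real a + real b + real j)
         * real j / (real b + real j - 1) * (real a - real b + 1) / (real a + real j))"
      using hook2_dim_neighbours[OF \<open>1 \<le> a\<close> 3] .
    have "real a + real j \<noteq> 0" "real a + real j + 1 \<noteq> 0" "real a + real b + real j \<noteq> 0"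
      "real b + real j - 1 \<noteq> 0"
      using assms 3 by linarith+
    note identity = hook2_ratio_identities(2)[OF this]
    have if_j: "(if 1 \<le> j then hook2_dim a b (j - 1) * (real j + 1) else 0)
        = (if 1 \<le> j then hook2_dim a b (j - 1) else 0) * (real j + 1)"
      by simp
    show ?thesis unfolding if_P[OF \<open>1 \<le> b\<close>] if_j D twice_contents_def of_nat_add by (rule identity)
  qed
qed

text \<open>The value at a transposition predicted by Frobenius' formula
  \<open>\<chi>(\<tau>) / d = 2 \<Sum> contents / (n (n - 1))\<close>.\<close>
definition hook2_transp :: "nat \<Rightarrow> nat \<Rightarrow> nat \<Rightarrow> real" where
  "hook2_transp a b j = hook2_dim a b j * twice_contents a b j / (real (a + b + j) * (real (a + b + j) - 1))"

lemma hook2_transp_eq_0_rows: "1 \<le> b \<Longrightarrow> hook2_transp (b - 1) b j = 0"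
  unfolding hook2_transp_def by (subst hook2_dim_eq_0_rows) simp_all

lemma hook2_transp_eq_0_column: "1 \<le> j \<Longrightarrow> hook2_transp a 0 j = 0"
  unfolding hook2_transp_def by (subst hook2_dim_eq_0_column) simp_all

text \<open>Removing a box of content \<open>x\<close> lowers \<open>C\<close>, twice the content sum, by \<open>2 x\<close>.\<close>
lemma normalized_content_branching:
  fixes D D\<^sub>0 D\<^sub>1 D\<^sub>2 C N x\<^sub>0 x\<^sub>1 x\<^sub>2 :: real
  assumes "D = D\<^sub>0 + D\<^sub>1 + D\<^sub>2" and "D\<^sub>0 * x\<^sub>0 + D\<^sub>1 * x\<^sub>1 + D\<^sub>2 * x\<^sub>2 = C * D / N"
    and "N \<noteq> 0" and "N - 2 \<noteq> 0"
  shows "D * C / (N * (N - 1))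
    = (D\<^sub>0 * (C - 2 * x\<^sub>0) + D\<^sub>1 * (C - 2 * x\<^sub>1) + D\<^sub>2 * (C - 2 * x\<^sub>2)) / ((N - 1) * (N - 2))"
proof -
  have "D\<^sub>0 * (C - 2 * x\<^sub>0) + D\<^sub>1 * (C - 2 * x\<^sub>1) + D\<^sub>2 * (C - 2 * x\<^sub>2)
      = C * (D\<^sub>0 + D\<^sub>1 + D\<^sub>2) - 2 * (D\<^sub>0 * x\<^sub>0 + D\<^sub>1 * x\<^sub>1 + D\<^sub>2 * x\<^sub>2)"
    by (simp add: algebra_simps)
  also have "\<dots> = C * D * (N - 2) / N" using assms by (simp add: field_simps)
  also have "\<dots> / ((N - 1) * (N - 2)) = D * C / (N * (N - 1))"
    by (simp only: divide_divide_eq_left mult.assoc[symmetric] mult.commute[of D C]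
        nonzero_mult_divide_mult_cancel_right[OF assms(4)])
  finally show ?thesis by simp
qed

lemma hook2_transp_rec:
  assumes "2 < a + b + j" and "1 \<le> a" and "1 \<le> b \<or> j = 0"
  shows "hook2_transp a b j = hook2_transp (a - 1) b j + (if 1 \<le> b then hook2_transp a (b - 1) j else 0)
    + (if 1 \<le> j then hook2_transp a b (j - 1) else 0)"
proof -
  define N C where "N = real (a + b + j)" and "C = twice_contents a b j"
  define D D\<^sub>0 D\<^sub>1 D\<^sub>2 where "D = hook2_dim a b j" and "D\<^sub>0 = hook2_dim (a - 1) b j"
    and "D\<^sub>1 = (if 1 \<le> b then hook2_dim a (b - 1) j else 0)" and "D\<^sub>2 = (if 1 \<le> j then hook2_dim a b (j - 1) else 0)"
  have N: "N \<noteq> 0" "N - 2 \<noteq> 0" using assms(1) unfolding N_def by linarith+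
  have sum: "D = D\<^sub>0 + D\<^sub>1 + D\<^sub>2"
    unfolding D_def D\<^sub>0_def D\<^sub>1_def D\<^sub>2_def by (rule hook2_dim_rec[OF assms(2,3)])
  have weighted: "D\<^sub>0 * (real a - 1) + D\<^sub>1 * (real b - 2) + D\<^sub>2 * - (real j + 1) = C * D / N"
    using hook2_dim_content_rec[OF assms(2,3)] unfolding D_def D\<^sub>0_def D\<^sub>1_def D\<^sub>2_def C_def N_def
    by (cases "1 \<le> b"; cases "1 \<le> j") (simp_all add: algebra_simps)
  have "hook2_transp a b j = (D\<^sub>0 * (C - 2 * (real a - 1)) + D\<^sub>1 * (C - 2 * (real b - 2))
      + D\<^sub>2 * (C - 2 * - (real j + 1))) / ((N - 1) * (N - 2))"
    unfolding hook2_transp_def D_def[symmetric] C_def[symmetric] N_def[symmetric]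
    by (rule normalized_content_branching[OF sum weighted N])
  moreover have "hook2_transp (a - 1) b j = D\<^sub>0 * (C - 2 * (real a - 1)) / ((N - 1) * (N - 2))"
    using assms(2) unfolding hook2_transp_def D\<^sub>0_def C_def N_def twice_contents_def
    by (simp add: of_nat_diff algebra_simps)
  moreover have "(if 1 \<le> b then hook2_transp a (b - 1) j else 0) = D\<^sub>1 * (C - 2 * (real b - 2)) / ((N - 1) * (N - 2))"
    unfolding hook2_transp_def D\<^sub>1_def C_def N_def twice_contents_def by (simp add: of_nat_diff algebra_simps)
  moreover have "(if 1 \<le> j then hook2_transp a b (j - 1) else 0) = D\<^sub>2 * (C - 2 * - (real j + 1)) / ((N - 1) * (N - 2))"
    unfolding hook2_transp_def D\<^sub>2_def C_def N_def twice_contents_def by (simp add: of_nat_diff algebra_simps)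
  ultimately show ?thesis by (simp only: add_divide_distrib)
qed

lemma hook2_dim_eq_binomials:
  assumes "k < i" and "i \<le> n"
  shows "hook2_dim (n - i) (i - k) k = real (n choose i) * real ((i - 1) choose k)
    * (real n - 2 * real i + real k + 1) / (real n - real i + real k + 1)"
  using assms by (simp add: hook2_dim_def of_nat_diff algebra_simps)

lemma normalized_twice_contents_hook2:
  assumes "k < i" and "i \<le> n" and "2 \<le> n"
  shows "twice_contents (n - i) (i - k) k / (real n * (real n - 1))
    = 1 - real i * (real n - real i + real k + 1) / real (n choose 2)"
proof -
  have "real (2 * (n choose 2)) = real (n * (n - 1))"
    using times_binomial_minus1_eq[of 2 n] by simp
  then have choose_2: "real (n choose 2) = real n * (real n - 1) / 2"
    using assms(3) by (simp add: of_nat_diff)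
  have "real n * (real n - 1) > 0" using assms(3) by simp
  then show ?thesis using assms unfolding twice_contents_def choose_2 by (simp add: of_nat_diff field_simps)
qed

section \<open>Dimension and value at a transposition\<close>

lemma gen_char_hook2_vec_Cons_1:
  assumes "1 \<le> k" and "j \<le> k" and "1 \<le> a" and "1 \<le> b \<or> j = 0"
  shows "gen_char (k + 2) (hook2_vec (int a) b j) (1 # \<rho>) = gen_char (k + 2) (hook2_vec (int (a - 1)) b j) \<rho>
    + (if 1 \<le> b then gen_char (k + 2) (hook2_vec (int a) (b - 1) j) \<rho> else 0)
    + (if 1 \<le> j then gen_char (k + 2) (hook2_vec (int a) b (j - 1)) \<rho> else 0)"
proof -
  define \<nu> where "\<nu> = hook2_vec (int a) b j"
  define g where "g w = gen_char (k + 2) (\<nu>(w := \<nu> w - 1)) \<rho>" for w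
  have clash: "g w = 0" if "w + 1 < k + 2" and "\<nu> (w + 1) = \<nu> w" for w
    unfolding g_def using that by (intro gen_char_eq_0_if_rows_clash[of w]) auto
  have "gen_char (k + 2) \<nu> (1 # \<rho>) = g 0 + g 1 + (\<Sum>w<k. g (w + 2))"
    unfolding gen_char_Cons g_def sum_lessThan_add_2 by simp
  also have "g 0 = gen_char (k + 2) (hook2_vec (int (a - 1)) b j) \<rho>"
    unfolding g_def \<nu>_def using assms by (intro gen_char_cong) (auto simp: hook2_vec_def)
  also have "g 1 = (if 1 \<le> b then gen_char (k + 2) (hook2_vec (int a) (b - 1) j) \<rho> else 0)"
    using assms clash[of 1] unfolding g_def \<nu>_def by (auto intro!: gen_char_cong simp: hook2_vec_def)
  also have "g (w + 2) = (if w = j - 1 \<and> 1 \<le> j then gen_char (k + 2) (hook2_vec (int a) b (j - 1)) \<rho> else 0)"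
    if "w < k" for w
  proof (cases "w + 1 = j")
    case True
    then show ?thesis unfolding g_def \<nu>_def by (auto intro!: gen_char_cong simp: hook2_vec_def)
  next
    case False
    have "g (w + 2) = 0"
    proof (cases "w + 1 = k")
      case True
      then show ?thesis unfolding g_def \<nu>_def using False \<open>j \<le> k\<close>
        by (intro gen_char_eq_0_if_row_neg[of "w + 2"]) (auto simp: hook2_vec_def)
    qed (use that False in \<open>intro clash, auto simp: \<nu>_def hook2_vec_def\<close>)
    then show ?thesis using False by auto
  qed
  then have "(\<Sum>w<k. g (w + 2)) = (if 1 \<le> j then gen_char (k + 2) (hook2_vec (int a) b (j - 1)) \<rho> else 0)"
    using \<open>j \<le> k\<close> by (auto simp: sum.delta)
  finally show ?thesis unfolding \<nu>_def .
qed

lemma gen_char_hook2_vec_eq_0_rows: "1 \<le> b \<Longrightarrow> gen_char (k + 2) (hook2_vec (int (b - 1)) b j) \<rho> = 0"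
  by (simp add: gen_char_eq_0_if_rows_clash[of 0] hook2_vec_def of_nat_diff)

lemma gen_char_hook2_vec_eq_0_column: "1 \<le> k \<Longrightarrow> 1 \<le> j \<Longrightarrow> gen_char (k + 2) (hook2_vec (int a) 0 j) \<rho> = 0"
  by (simp add: gen_char_eq_0_if_rows_clash[of 1] hook2_vec_def)

text \<open>Removing the fixed points one at a time: a function obeying the branching rule and the
  vanishing conditions of the generalised characters, and agreeing with them on \<open>\<rho>\<close>, agrees
  with them on \<open>1\<^sup>m \<rho>\<close>.\<close>
lemma gen_char_hook2_vec_ones_append:
  fixes f :: "nat \<Rightarrow> nat \<Rightarrow> nat \<Rightarrow> real"
  assumes "1 \<le> k"
    and f_rec: "\<And>a b j. s < a + b + j \<Longrightarrow> 1 \<le> a \<Longrightarrow> 1 \<le> b \<or> j = 0 \<Longrightarrow>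
      f a b j = f (a - 1) b j + (if 1 \<le> b then f a (b - 1) j else 0) + (if 1 \<le> j then f a b (j - 1) else 0)"
    and f_rows: "\<And>b j. 1 \<le> b \<Longrightarrow> f (b - 1) b j = 0"
    and f_column: "\<And>a j. 1 \<le> j \<Longrightarrow> f a 0 j = 0"
    and base: "\<And>a b j. a + b + j = s \<Longrightarrow> j \<le> k \<Longrightarrow> b \<le> a \<Longrightarrow> 1 \<le> b \<or> j = 0 \<Longrightarrow>
      real_of_int (gen_char (k + 2) (hook2_vec (int a) b j) \<rho>) = f a b j"
  shows "a + b + j = m + s \<Longrightarrow> j \<le> k \<Longrightarrow> b \<le> a \<Longrightarrow> 1 \<le> b \<or> j = 0 \<Longrightarrow>
    real_of_int (gen_char (k + 2) (hook2_vec (int a) b j) (replicate m 1 @ \<rho>)) = f a b j"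
proof (induction m arbitrary: a b j)
  case 0
  then show ?case using base[of a b j] by simp
next
  case (Suc m)
  define F where "F a b j = real_of_int (gen_char (k + 2) (hook2_vec (int a) b j) (replicate m 1 @ \<rho>))" for a b j
  have "1 \<le> a" using Suc.prems by auto
  have "F (a - 1) b j = f (a - 1) b j"
  proof (cases "b \<le> a - 1")
    case True
    then show ?thesis unfolding F_def using Suc by (intro Suc.IH) auto
  next
    case False
    then have "a = b" "1 \<le> b" using Suc.prems(3) \<open>1 \<le> a\<close> by linarith+
    then show ?thesis unfolding F_def using gen_char_hook2_vec_eq_0_rows f_rows by simp
  qed
  moreover have "F a (b - 1) j = f a (b - 1) j" if "1 \<le> b"
  proof (cases "2 \<le> b \<or> j = 0")
    case True
    then show ?thesis unfolding F_def using Suc that by (intro Suc.IH) auto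
  next
    case False
    then have "b - 1 = 0" "1 \<le> j" using that by linarith+
    then show ?thesis unfolding F_def using gen_char_hook2_vec_eq_0_column[OF \<open>1 \<le> k\<close>] f_column by simp
  qed
  moreover have "F a b (j - 1) = f a b (j - 1)" if "1 \<le> j"
    unfolding F_def using Suc that by (intro Suc.IH) auto
  ultimately have "real_of_int (gen_char (k + 2) (hook2_vec (int a) b j) (1 # replicate m 1 @ \<rho>))
      = f (a - 1) b j + (if 1 \<le> b then f a (b - 1) j else 0) + (if 1 \<le> j then f a b (j - 1) else 0)"
    unfolding gen_char_hook2_vec_Cons_1[OF \<open>1 \<le> k\<close> Suc.prems(2) \<open>1 \<le> a\<close> Suc.prems(4)] F_def by simp
  also have "\<dots> = f a b j"
    using f_rec[OF _ \<open>1 \<le> a\<close> Suc.prems(4)] Suc.prems(1) by simp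
  finally show ?case by simp
qed

lemma dimension_hook2:
  assumes "1 \<le> k" and "k < i" and "i - k \<le> n - i"
  shows "real_of_int (dimension (hook2 n i k) n) = hook2_dim (n - i) (i - k) k"
proof -
  have base: "real_of_int (gen_char (k + 2) (hook2_vec (int a) b j) []) = hook2_dim a b j"
    if "a + b + j = 0" for a b j
    using that gen_char_Nil[OF permutes_id, of "k + 2" "hook2_vec 0 0 0"]
    by (simp add: hook2_vec_def hook2_dim_one_row)
  have "real_of_int (gen_char (k + 2) (hook2_vec (int (n - i)) (i - k) k) (replicate n 1 @ []))
      = hook2_dim (n - i) (i - k) k"
    by (rule gen_char_hook2_vec_ones_append[where s = 0,
          OF _ hook2_dim_rec hook2_dim_eq_0_rows hook2_dim_eq_0_column base]) (use assms in auto)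
  then show ?thesis using assms
    by (simp add: dimension_def character_hook2 cycle_list_id_class)
qed

lemma gen_char_hook2_vec_size_2:
  assumes "1 \<le> k" and "a + b + j = 2" and "b \<le> a" and "1 \<le> b \<or> j = 0"
  shows "real_of_int (gen_char (k + 2) (hook2_vec (int a) b j) [2]) = hook2_transp a b j"
proof -
  define \<nu> where "\<nu> = hook2_vec (int a) b j"
  have "1 \<le> a" using assms by linarith
  then have "gen_char (k + 2) (\<nu>(w := \<nu> w - 2)) [] = 0" if "w \<noteq> 0" for w
    using that by (intro gen_char_Nil_eq_0) (auto simp: \<nu>_def hook2_vec_def)
  then have reduce: "gen_char (k + 2) \<nu> [2] = gen_char (k + 2) (\<nu>(0 := \<nu> 0 - 2)) []"
    using gen_char_snoc[of "k + 2" \<nu> "[]" 2] unfolding sum_lessThan_add_2 by simp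
  consider "a = 2" "b = 0" "j = 0" | "a = 1" "b = 1" "j = 0" using assms by linarith
  then show ?thesis
  proof cases
    case 1
    have "gen_char (k + 2) (\<nu>(0 := \<nu> 0 - 2)) [] = sign (id :: nat \<Rightarrow> nat)"
      by (intro gen_char_Nil[OF permutes_id]) (use 1 in \<open>auto simp: \<nu>_def hook2_vec_def\<close>)
    with 1 reduce show ?thesis
      by (simp add: \<nu>_def hook2_transp_def hook2_dim_one_row twice_contents_def)
  next
    case 2
    have "Transposition.transpose 0 1 permutes {..<k + 2}" by (intro permutes_swap_id) auto
    then have "gen_char (k + 2) (\<nu>(0 := \<nu> 0 - 2)) [] = sign (Transposition.transpose (0::nat) 1)"
      by (rule gen_char_Nil) (use 2 in \<open>auto simp: \<nu>_def hook2_vec_def Transposition.transpose_def\<close>)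
    with 2 reduce show ?thesis
      by (simp add: \<nu>_def hook2_transp_def hook2_dim_def twice_contents_def sign_swap_id)
  qed
qed

lemma character_hook2_transp_class:
  assumes "1 \<le> k" and "k < i" and "i - k \<le> n - i"
  shows "real_of_int (character (hook2 n i k) n (transp_class n)) = hook2_transp (n - i) (i - k) k"
proof -
  have "real_of_int (gen_char (k + 2) (hook2_vec (int (n - i)) (i - k) k) (replicate (n - 2) 1 @ [2]))
      = hook2_transp (n - i) (i - k) k"
    by (rule gen_char_hook2_vec_ones_append[where s = 2, OF _ hook2_transp_rec hook2_transp_eq_0_rows
          hook2_transp_eq_0_column gen_char_hook2_vec_size_2]) (use assms in auto)
  then show ?thesis using assms
    by (simp add: character_hook2 cycle_list_transp_class)
qed

theorem proposition5p6:
  fixes n i k :: nat and a b :: "nat \<Rightarrow> nat"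
  assumes "1 \<le> k" and "k < i" and "i - k \<le> n - i"
    and "cycle_type n a" and "cycle_type n b"
    and "\<forall>j. 1 \<le> j \<and> j < i \<longrightarrow> a j = b j"
  shows "(character (hook2 n i k) n a - character (hook2 n i k) n b
           = (-1) ^ k * (int (a i) - int (b i))) \<and>
         (real_of_int (dimension (hook2 n i k) n)
           = real (n choose i) * real ((i - 1) choose k)
             * (real n - 2 * real i + real k + 1) / (real n - real i + real k + 1)) \<and>
         (real_of_int (character (hook2 n i k) n (transp_class n))
           / real_of_int (dimension (hook2 n i k) n)
           = 1 - real i * (real n - real i + real k + 1) / real (n choose 2))"
proof -
  have "i \<le> n" "2 \<le> n" using assms(1-3) by linarith+
  note dim = dimension_hook2[OF assms(1-3), unfolded hook2_dim_eq_binomials[OF \<open>k < i\<close> \<open>i \<le> n\<close>]]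
  have "real_of_int (dimension (hook2 n i k) n) > 0"
    unfolding dim using assms(1-3) \<open>i \<le> n\<close> by (intro divide_pos_pos mult_pos_pos) auto
  then have "real_of_int (character (hook2 n i k) n (transp_class n)) / real_of_int (dimension (hook2 n i k) n)
      = twice_contents (n - i) (i - k) k / (real n * (real n - 1))"
    using \<open>k < i\<close> \<open>i \<le> n\<close>
    by (simp add: character_hook2_transp_class[OF assms(1-3)] dimension_hook2[OF assms(1-3)] hook2_transp_def)
  then show ?thesis
    using character_hook2_diff[OF assms(1,2) \<open>i \<le> n\<close> assms(4,5)] assms(6) dim
      normalized_twice_contents_hook2[OF \<open>k < i\<close> \<open>i \<le> n\<close> \<open>2 \<le> n\<close>]
    by simp
qed

end
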